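(* Let $G$ be a graph, $m\geq 3$, and $\mathcal{H}=(L,H)$ an $m$-fold cover of $G$. Let $\alpha_1,\alpha_2,\alpha_3$ be a path in $G$ with $\alpha_1\alpha_3\notin E(G)$, let $e_1=\alpha_1\alpha_2$, $e_2=\alpha_2\alpha_3$, and let $G_0=G-\{e_1,e_2\}$, $G_1=G-\{e_1\}$, $G_2=G-\{e_2\}$, and $G^*$ the graph obtained from $G$ by adding the edge $\alpha_1\alpha_3$. Let $H'=H-(E_H(L(\alpha_1),L(\alpha_2))\cup E_H(L(\alpha_2),L(\alpha_3)))$, so $\mathcal{H}'=(L,H')$ is an $m$-fold cover of $G_0$, and assume there is a natural bijection between the $\mathcal{H}'$-colorings of $G_0$ and the proper $m$-colorings of $G_0$. Define $A_1=P(G_0,m)-P(G,m)$, $A_2=P(G_0,m)-P(G_2,m)+\frac{1}{m-1}P(G,m)$, $A_3=P(G_0,m)-P(G_1,m)+\frac{1}{m-1}P(G,m)$, $A_4=\frac{1}{m-1}\left(P(G_1,m)+P(G_2,m)+P(G^*,m)-P(G,m)\right)$, $A_5=\frac{1}{m-1}\left(P(G_1,m)+P(G_2,m)-\frac{1}{m-2}P(G^*,m)\right)$. Then $P_{DP}(G,\mathcal{H})\geq P(G_0,m)-\max\{A_1,A_2,A_3,A_4,A_5\}$. Moreover, there exists an $m$-fold cover $\mathcal{H}^*$ of $G$ with $P_{DP}(G,\mathcal{H}^* )=P(G_0,m)-\max\{A_1,A_2,A_3,A_4,A_5\}$.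
   Context: All graphs are finite and simple; $G-F$ denotes deletion of the edge set $F$. $P(G,m)$ denotes the chromatic polynomial of $G$. A cover of a graph $G$ is a pair $\mathcal{H}=(L,H)$ where $H$ is a graph and $L:V(G)\to\mathcal{P}(V(H))$ satisfies: (1) the sets $L(u)$, $u\in V(G)$, partition $V(H)$; (2) for every $u$, $H[L(u)]$ is complete; (3) if $E_H(L(u),L(v))\neq\emptyset$ then $u=v$ or $uv\in E(G)$; (4) if $uv\in E(G)$ then $E_H(L(u),L(v))$ is a matching (possibly empty). Here $E_H(S,U)$ is the set of edges of $H$ between $S$ and $U$. The cover is $m$-fold if $|L(u)|=m$ for all $u$. An $\mathcal{H}$-coloring is an independent set of $H$ of size $|V(G)|$; $P_{DP}(G,\mathcal{H})$ is the number of $\mathcal{H}$-colorings. For an $m$-fold cover $\mathcal{H}=(L,H)$ of $G$, we say there is a natural bijection between the $\mathcal{H}$-colorings of $G$ and the proper $m$-colorings of $G$ if the elements of each $L(v)$ can be labeled $L(v)=\{(v,j):j\in[m]\}$ so that whenever $uv\in E(G)$, $(u,j)$ and $(v,j)$ are adjacent in $H$ for every $j\in[m]$. *)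

theory Defs
  imports Complex_Main "HOL-Library.FuncSet"
begin

definition simple_graph :: "'a set \<Rightarrow> 'a set set \<Rightarrow> bool" where
  "simple_graph V E \<longleftrightarrow> finite V \<and> (\<forall>e\<in>E. \<exists>u v. e = {u, v} \<and> u \<noteq> v \<and> u \<in> V \<and> v \<in> V)"

definition proper_colorings :: "'a set \<Rightarrow> 'a set set \<Rightarrow> nat \<Rightarrow> ('a \<Rightarrow> nat) set" where
  "proper_colorings V E m = {f \<in> V \<rightarrow>\<^sub>E {..<m}. \<forall>u v. {u, v} \<in> E \<longrightarrow> f u \<noteq> f v}"

definition chrom_poly :: "'a set \<Rightarrow> 'a set set \<Rightarrow> nat \<Rightarrow> nat" where
  "chrom_poly V E m = card (proper_colorings V E m)"

definition edges_between :: "'b set set \<Rightarrow> 'b set \<Rightarrow> 'b set \<Rightarrow> 'b set set" where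
  "edges_between EH S U = {e \<in> EH. \<exists>x\<in>S. \<exists>y\<in>U. e = {x, y}}"

definition is_cover :: "'a set \<Rightarrow> 'a set set \<Rightarrow> ('a \<Rightarrow> 'b set) \<Rightarrow> 'b set \<Rightarrow> 'b set set \<Rightarrow> bool" where
  "is_cover V E L VH EH \<longleftrightarrow>
     simple_graph VH EH \<and>
     \<comment> \<open>(1) the L(u) partition V(H)\<close>
     (\<Union>u\<in>V. L u) = VH \<and>
     (\<forall>u\<in>V. \<forall>v\<in>V. u \<noteq> v \<longrightarrow> L u \<inter> L v = {}) \<and>
     \<comment> \<open>(2) each H[L(u)] is complete\<close>
     (\<forall>u\<in>V. \<forall>x\<in>L u. \<forall>y\<in>L u. x \<noteq> y \<longrightarrow> {x, y} \<in> EH) \<and>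
     \<comment> \<open>(3) edges of H only between L(u), L(v) with u = v or uv an edge\<close>
     (\<forall>u\<in>V. \<forall>v\<in>V. edges_between EH (L u) (L v) \<noteq> {} \<longrightarrow> u = v \<or> {u, v} \<in> E) \<and>
     \<comment> \<open>(4) for uv an edge, E_H(L(u),L(v)) is a matching\<close>
     (\<forall>u\<in>V. \<forall>v\<in>V. {u, v} \<in> E \<longrightarrow>
        (\<forall>e1\<in>edges_between EH (L u) (L v). \<forall>e2\<in>edges_between EH (L u) (L v).
            e1 \<noteq> e2 \<longrightarrow> e1 \<inter> e2 = {}))"

definition is_mfold_cover :: "'a set \<Rightarrow> 'a set set \<Rightarrow> nat \<Rightarrow> ('a \<Rightarrow> 'b set) \<Rightarrow> 'b set \<Rightarrow> 'b set set \<Rightarrow> bool" where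
  "is_mfold_cover V E m L VH EH \<longleftrightarrow> is_cover V E L VH EH \<and> (\<forall>u\<in>V. card (L u) = m)"

definition independent_set :: "'b set \<Rightarrow> 'b set set \<Rightarrow> 'b set \<Rightarrow> bool" where
  "independent_set VH EH I \<longleftrightarrow> I \<subseteq> VH \<and> (\<forall>x\<in>I. \<forall>y\<in>I. {x, y} \<notin> EH)"

definition dp_colorings :: "'a set \<Rightarrow> 'b set \<Rightarrow> 'b set set \<Rightarrow> 'b set set" where
  "dp_colorings V VH EH = {I. independent_set VH EH I \<and> card I = card V}"

definition P_DP :: "'a set \<Rightarrow> 'b set \<Rightarrow> 'b set set \<Rightarrow> nat" where
  "P_DP V VH EH = card (dp_colorings V VH EH)"

definition natural_bijection :: "'a set \<Rightarrow> 'a set set \<Rightarrow> nat \<Rightarrow> ('a \<Rightarrow> 'b set) \<Rightarrow> 'b set set \<Rightarrow> bool" where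
  "natural_bijection V E m L EH \<longleftrightarrow>
     (\<exists>lab :: 'a \<Rightarrow> nat \<Rightarrow> 'b.
        (\<forall>v\<in>V. bij_betw (lab v) {..<m} (L v)) \<and>
        (\<forall>u\<in>V. \<forall>v\<in>V. {u, v} \<in> E \<longrightarrow> (\<forall>j<m. {lab u j, lab v j} \<in> EH)))"

end

theory Submission
  imports Defs "HOL-Combinatorics.Transposition"
begin

text \<open>
  By the natural bijection, the DP-colourings of \<open>(L, H)\<close> are the lifts of those proper
  \<open>m\<close>-colourings \<open>f\<close> of \<open>G\<^sub>0\<close> that avoid the edges of \<open>H\<close> over \<open>a\<^sub>1a\<^sub>2\<close> and \<open>a\<^sub>2a\<^sub>3\<close>.
  These edges form matchings, so for each colour \<open>j\<close> of \<open>a\<^sub>2\<close> at most one colour \<open>i\<close> of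
  \<open>a\<^sub>1\<close> and one colour \<open>k\<close> of \<open>a\<^sub>3\<close> are forbidden, and the colourings lost number at most
  \<open>\<Sum>\<^sub>j conflicts i\<^sub>j j k\<^sub>j\<close>. Permuting colours shows that \<open>conflicts i j k\<close> only depends
  on which of \<open>i, j, k\<close> coincide, and \<open>m\<close> times its five possible values are
  \<open>A\<^sub>1, \<dots>, A\<^sub>5\<close>. Hence at most \<open>max A\<^sub>t\<close> colourings are lost, and twisting the two matchings
  by cyclic shifts of the colours realises the maximising type for every \<open>j\<close>.
\<close>

section \<open>Graphs and proper colourings\<close>

lemma simple_graph_edgeD:
  assumes "simple_graph V E" "{u, v} \<in> E"
  shows "u \<in> V" "v \<in> V" "u \<noteq> v"
  using assms unfolding simple_graph_def by (auto simp: doubleton_eq_iff)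

lemma simple_graph_no_loop: "simple_graph V E \<Longrightarrow> {x} \<notin> E"
  using simple_graph_edgeD(3)[of V E x x] by auto

lemma proper_colorings_insert_edge:
  "proper_colorings V (insert {a, b} F) m = {f \<in> proper_colorings V F m. f a \<noteq> f b}"
  unfolding proper_colorings_def by (auto simp: doubleton_eq_iff)

lemma card_proper_colorings_fixed_transpose:
  assumes G: "simple_graph V F" and abc: "a \<in> V" "b \<in> V" "c \<in> V" and xy: "x < m" "y < m"
  shows "card {f \<in> proper_colorings V F m. f a = i \<and> f b = j \<and> f c = k} =
    card {f \<in> proper_colorings V F m.
      f a = transpose x y i \<and> f b = transpose x y j \<and> f c = transpose x y k}"
proof (rule bij_betw_same_card)
  let ?\<tau> = "\<lambda>f. restrict (transpose x y \<circ> f) V"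
  have proper: "?\<tau> f \<in> proper_colorings V F m" if f: "f \<in> proper_colorings V F m" for f
    unfolding proper_colorings_def
  proof (intro CollectI conjI allI impI)
    show "?\<tau> f \<in> V \<rightarrow>\<^sub>E {..<m}"
      using f xy by (auto simp: proper_colorings_def transpose_def)
    fix u v assume "{u, v} \<in> F"
    then show "?\<tau> f u \<noteq> ?\<tau> f v"
      using f simple_graph_edgeD[OF G]
      by (simp add: proper_colorings_def inj_eq[OF inj_transpose])
  qed
  show "bij_betw ?\<tau> {f \<in> proper_colorings V F m. f a = i \<and> f b = j \<and> f c = k}
    {f \<in> proper_colorings V F m.
      f a = transpose x y i \<and> f b = transpose x y j \<and> f c = transpose x y k}"
  proof (rule bij_betw_byWitness[where f' = ?\<tau>])
    have inv: "?\<tau> (?\<tau> f) = f" if "f \<in> proper_colorings V F m" for f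
      using that by (auto simp: proper_colorings_def fun_eq_iff PiE_iff extensional_def)
    show "\<forall>f\<in>{f \<in> proper_colorings V F m. f a = i \<and> f b = j \<and> f c = k}. ?\<tau> (?\<tau> f) = f"
      using inv by blast
    show "\<forall>f\<in>{f \<in> proper_colorings V F m.
      f a = transpose x y i \<and> f b = transpose x y j \<and> f c = transpose x y k}. ?\<tau> (?\<tau> f) = f"
      using inv by blast
  qed (use proper abc in auto)
qed

lemma card_proper_colorings_fixed_eq_type:
  fixes i j k i' j' k' :: nat
  assumes G: "simple_graph V F" and abc: "a \<in> V" "b \<in> V" "c \<in> V"
    and lt: "i < m" "j < m" "k < m" "i' < m" "j' < m" "k' < m"
    and type: "i = j \<longleftrightarrow> i' = j'" "j = k \<longleftrightarrow> j' = k'" "i = k \<longleftrightarrow> i' = k'"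
  shows "card {f \<in> proper_colorings V F m. f a = i \<and> f b = j \<and> f c = k} =
    card {f \<in> proper_colorings V F m. f a = i' \<and> f b = j' \<and> f c = k'}"
proof -
  define N where "N i j k = card {f \<in> proper_colorings V F m. f a = i \<and> f b = j \<and> f c = k}"
    for i j k
  have N: "N i j k = N (transpose x y i) (transpose x y j) (transpose x y k)"
    if "x < m" "y < m" for x y i j k
    unfolding N_def by (rule card_proper_colorings_fixed_transpose[OF G abc that])
  have transpose_eq: "transpose x y u = transpose x y v \<longleftrightarrow> u = v" for x y u v :: nat
    by (rule inj_eq[OF inj_transpose])
  \<comment> \<open>three transpositions place \<open>i'\<close>, \<open>j'\<close>, \<open>k'\<close> in turn, each fixing the colours
    already placed\<close>
  define j1 k1 where "j1 = transpose i i' j" and "k1 = transpose i i' k"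
  define k2 where "k2 = transpose j1 j' k1"
  have j1_k2_lt: "j1 < m" "k2 < m"
    using lt by (simp_all add: j1_def k1_def k2_def transpose_def)
  have j1: "j1 = i' \<longleftrightarrow> j = i" and k1: "k1 = i' \<longleftrightarrow> k = i" "k1 = j1 \<longleftrightarrow> k = j"
    using transpose_eq[of i i' _ i] transpose_eq[of i i' k j] by (auto simp: j1_def k1_def)
  have fix_i': "transpose j1 j' i' = i'"
    using j1 type(1) by (cases "j = i") auto
  then have k2: "k2 = i' \<longleftrightarrow> k = i" "k2 = j' \<longleftrightarrow> k = j"
    using transpose_eq[of j1 j' k1 i'] transpose_eq[of j1 j' k1 j1] k1 by (auto simp: k2_def)
  have "N i j k = N i' j1 k1" using N[of i i' i j k] lt by (simp add: j1_def k1_def)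
  also have "\<dots> = N i' j' k2" using N[of j1 j' i' j1 k1] j1_k2_lt lt fix_i' by (simp add: k2_def)
  also have "\<dots> = N i' j' k'"
  proof -
    have "transpose k2 k' i' = i'" "transpose k2 k' j' = j'"
      using k2 type by (cases "k = i"; cases "k = j"; auto)+
    then show ?thesis using N[of k2 k' i' j' k2] j1_k2_lt lt by simp
  qed
  finally show ?thesis by (simp add: N_def)
qed

section \<open>DP-colourings of a cover as transversals\<close>

lemma is_coverD:
  assumes "is_cover V E L VH EH"
  shows "simple_graph VH EH" "(\<Union>u\<in>V. L u) = VH"
    "\<forall>u\<in>V. \<forall>v\<in>V. u \<noteq> v \<longrightarrow> L u \<inter> L v = {}"
    "\<forall>u\<in>V. \<forall>x\<in>L u. \<forall>y\<in>L u. x \<noteq> y \<longrightarrow> {x, y} \<in> EH"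
    "\<forall>u\<in>V. \<forall>v\<in>V. edges_between EH (L u) (L v) \<noteq> {} \<longrightarrow> u = v \<or> {u, v} \<in> E"
    "\<forall>u\<in>V. \<forall>v\<in>V. {u, v} \<in> E \<longrightarrow>
        (\<forall>e1\<in>edges_between EH (L u) (L v). \<forall>e2\<in>edges_between EH (L u) (L v).
            e1 \<noteq> e2 \<longrightarrow> e1 \<inter> e2 = {})"
  using assms unfolding is_cover_def by simp_all

definition transversal :: "('a \<Rightarrow> nat \<Rightarrow> 'b) \<Rightarrow> 'a set \<Rightarrow> ('a \<Rightarrow> nat) \<Rightarrow> 'b set" where
  "transversal lab V f = (\<lambda>v. lab v (f v)) ` V"

context
  fixes V :: "'a set" and E :: "'a set set" and L :: "'a \<Rightarrow> 'b set" and VH :: "'b set" and EH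
  assumes cover: "is_cover V E L VH EH"
begin

lemma cover_fibers_disjoint: "u \<in> V \<Longrightarrow> v \<in> V \<Longrightarrow> x \<in> L u \<Longrightarrow> x \<in> L v \<Longrightarrow> u = v"
  using is_coverD(3)[OF cover] by blast

lemma cover_fiber_clique: "u \<in> V \<Longrightarrow> x \<in> L u \<Longrightarrow> y \<in> L u \<Longrightarrow> x \<noteq> y \<Longrightarrow> {x, y} \<in> EH"
  using is_coverD(4)[OF cover] by blast

lemma cover_edge_lifts:
  assumes "u \<in> V" "v \<in> V" "x \<in> L u" "y \<in> L v" "{x, y} \<in> EH"
  shows "u = v \<or> {u, v} \<in> E"
proof -
  have "edges_between EH (L u) (L v) \<noteq> {}"
    using assms unfolding edges_between_def by blast
  then show ?thesis using is_coverD(5)[OF cover] assms(1,2) by blast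
qed

lemma cover_matching:
  assumes uv: "u \<in> V" "v \<in> V" "u \<noteq> v" "{u, v} \<in> E"
    and x: "x \<in> L u" "x' \<in> L u" and y: "y \<in> L v" and e: "{x, y} \<in> EH" "{x', y} \<in> EH"
  shows "x = x'"
proof (rule ccontr)
  assume "x \<noteq> x'"
  moreover have "x \<noteq> y" using cover_fibers_disjoint uv x y by blast
  ultimately have "{x, y} \<noteq> {x', y}" by (auto simp: doubleton_eq_iff)
  moreover have "{x, y} \<in> edges_between EH (L u) (L v)" "{x', y} \<in> edges_between EH (L u) (L v)"
    unfolding edges_between_def using e x y by blast+
  ultimately have "{x, y} \<inter> {x', y} = {}"
    using is_coverD(6)[OF cover, rule_format, OF uv(1,2,4)] by blast
  then show False by blast
qed

lemma dp_coloring_fiber_unique: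
  assumes "I \<in> dp_colorings V VH EH" "u \<in> V" "x \<in> I" "y \<in> I" "x \<in> L u" "y \<in> L u"
  shows "x = y"
proof (rule ccontr)
  assume "x \<noteq> y"
  then have "{x, y} \<in> EH" using cover_fiber_clique assms(2,5,6) by blast
  moreover have "{x, y} \<notin> EH"
    using assms(1,3,4) unfolding dp_colorings_def independent_set_def by blast
  ultimately show False by contradiction
qed

lemma dp_coloring_meets_fiber:
  assumes "finite V" "I \<in> dp_colorings V VH EH" "v \<in> V"
  shows "\<exists>x\<in>I. x \<in> L v"
proof -
  have I: "I \<subseteq> VH" "card I = card V"
    using assms(2) unfolding dp_colorings_def independent_set_def by blast+
  have fin: "finite (I \<inter> L u)" for u
    using I(1) is_coverD(1)[OF cover] finite_subset by (auto simp: simple_graph_def)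
  have at_most_one: "card (I \<inter> L u) \<le> 1" if "u \<in> V" for u
    using dp_coloring_fiber_unique[OF assms(2) that] by (auto simp: card_le_Suc0_iff_eq[OF fin])
  have "I = (\<Union>u\<in>V. I \<inter> L u)" using I(1) is_coverD(2)[OF cover] by blast
  also have "card \<dots> = (\<Sum>u\<in>V. card (I \<inter> L u))"
  proof (rule card_UN_disjoint)
    show "\<forall>u\<in>V. \<forall>u'\<in>V. u \<noteq> u' \<longrightarrow> (I \<inter> L u) \<inter> (I \<inter> L u') = {}"
      using cover_fibers_disjoint by blast
  qed (use assms(1) fin in auto)
  finally have "(\<Sum>u\<in>V. card (I \<inter> L u)) = (\<Sum>u\<in>V. 1)" using I(2) by simp
  then have "card (I \<inter> L v) = 1"
    using sum_mono_inv[of "\<lambda>u. card (I \<inter> L u)"] at_most_one assms(1,3) by blast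
  then show ?thesis by (auto simp: card_Suc_eq)
qed

context
  fixes lab :: "'a \<Rightarrow> nat \<Rightarrow> 'b" and m :: nat
  assumes lab: "\<And>v. v \<in> V \<Longrightarrow> bij_betw (lab v) {..<m} (L v)"
begin

lemma lab_in_fiber: "v \<in> V \<Longrightarrow> j < m \<Longrightarrow> lab v j \<in> L v"
  using bij_betw_apply[OF lab] by simp

lemma lab_inj: "v \<in> V \<Longrightarrow> j < m \<Longrightarrow> j' < m \<Longrightarrow> lab v j = lab v j' \<Longrightarrow> j = j'"
  using inj_onD[OF bij_betw_imp_inj_on[OF lab]] by simp

lemma fiber_eq_lab: "v \<in> V \<Longrightarrow> x \<in> L v \<Longrightarrow> \<exists>j<m. x = lab v j"
  using bij_betw_imp_surj_on[OF lab] by force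

lemma transversal_subset:
  assumes f: "f \<in> V \<rightarrow>\<^sub>E {..<m}"
  shows "transversal lab V f \<subseteq> VH"
proof
  fix x assume "x \<in> transversal lab V f"
  then obtain v where v: "v \<in> V" "x = lab v (f v)" unfolding transversal_def by blast
  then have "x \<in> L v" using lab_in_fiber f by auto
  then show "x \<in> VH" using is_coverD(2)[OF cover] v(1) by blast
qed

lemma card_transversal:
  assumes f: "f \<in> V \<rightarrow>\<^sub>E {..<m}"
  shows "card (transversal lab V f) = card V"
  unfolding transversal_def
proof (rule card_image, rule inj_onI)
  fix u v assume uv: "u \<in> V" "v \<in> V" "lab u (f u) = lab v (f v)"
  then have "lab u (f u) \<in> L v" using lab_in_fiber f by fastforce
  then show "u = v" using cover_fibers_disjoint[OF uv(1,2)] lab_in_fiber uv(1) f by fastforce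
qed

lemma inj_on_transversal: "inj_on (transversal lab V) (V \<rightarrow>\<^sub>E {..<m})"
proof (rule inj_onI)
  fix f g assume f: "f \<in> V \<rightarrow>\<^sub>E {..<m}" and g: "g \<in> V \<rightarrow>\<^sub>E {..<m}"
    and eq: "transversal lab V f = transversal lab V g"
  have "f v = g v" if v: "v \<in> V" for v
  proof -
    obtain u where u: "u \<in> V" "lab v (f v) = lab u (g u)"
      using eq v unfolding transversal_def by blast
    have lt: "f v < m" "g u < m" using f g u(1) v by auto
    have "u = v" using cover_fibers_disjoint[OF u(1) v] lab_in_fiber[OF u(1) lt(2)]
        lab_in_fiber[OF v lt(1)] u(2) by simp
    with u lt show ?thesis using lab_inj[OF v] by simp
  qed
  then show "f = g" using f g by (auto intro: PiE_ext)
qed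

lemma dp_coloring_transversal:
  assumes "finite V" "I \<in> dp_colorings V VH EH"
  shows "\<exists>f\<in>V \<rightarrow>\<^sub>E {..<m}. I = transversal lab V f"
proof -
  have I: "I \<subseteq> VH" using assms(2) by (simp add: dp_colorings_def independent_set_def)
  have "\<forall>v\<in>V. \<exists>j. j < m \<and> lab v j \<in> I"
  proof
    fix v assume v: "v \<in> V"
    obtain x where "x \<in> I" "x \<in> L v" using dp_coloring_meets_fiber[OF assms v] by blast
    then show "\<exists>j. j < m \<and> lab v j \<in> I" using fiber_eq_lab[OF v] by blast
  qed
  from bchoice[OF this] obtain f where f: "\<forall>v\<in>V. f v < m \<and> lab v (f v) \<in> I" ..
  have "I \<subseteq> transversal lab V (restrict f V)"
  proof
    fix x assume x: "x \<in> I"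
    then obtain v where v: "v \<in> V" "x \<in> L v" using I is_coverD(2)[OF cover] by blast
    have "lab v (f v) \<in> I" "lab v (f v) \<in> L v" using f lab_in_fiber[OF v(1)] v(1) by simp_all
    then have "x = lab v (f v)" using dp_coloring_fiber_unique[OF assms(2) v(1) x] v(2) by simp
    then show "x \<in> transversal lab V (restrict f V)" unfolding transversal_def using v(1) by simp
  qed
  moreover have "transversal lab V (restrict f V) \<subseteq> I"
    using f unfolding transversal_def by auto
  moreover have "restrict f V \<in> V \<rightarrow>\<^sub>E {..<m}" using f by simp
  ultimately show ?thesis by blast
qed

lemma bij_betw_transversal_dp_colorings:
  assumes "finite V"
  shows "bij_betw (transversal lab V)
     {f \<in> V \<rightarrow>\<^sub>E {..<m}. independent_set VH EH (transversal lab V f)} (dp_colorings V VH EH)"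
proof (rule bij_betw_imageI)
  show "inj_on (transversal lab V) {f \<in> V \<rightarrow>\<^sub>E {..<m}. independent_set VH EH (transversal lab V f)}"
    using inj_on_transversal by (rule inj_on_subset) blast
  show "transversal lab V ` {f \<in> V \<rightarrow>\<^sub>E {..<m}. independent_set VH EH (transversal lab V f)}
      = dp_colorings V VH EH"
    using dp_coloring_transversal[OF assms] card_transversal
    by (auto simp: dp_colorings_def)
qed

lemma independent_transversal_iff:
  assumes G: "simple_graph V E" and F: "F \<subseteq> E"
    and natural: "\<And>u v j. {u, v} \<in> F \<Longrightarrow> j < m \<Longrightarrow> {lab u j, lab v j} \<in> EH"
    and f: "f \<in> V \<rightarrow>\<^sub>E {..<m}"
  shows "independent_set VH EH (transversal lab V f) \<longleftrightarrow>
    f \<in> proper_colorings V F m \<and> (\<forall>u v. {u, v} \<in> E - F \<longrightarrow> {lab u (f u), lab v (f v)} \<notin> EH)"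
    (is "_ \<longleftrightarrow> ?proper \<and> ?cross")
proof -
  have "independent_set VH EH (transversal lab V f) \<longleftrightarrow>
      (\<forall>u\<in>V. \<forall>v\<in>V. {lab u (f u), lab v (f v)} \<notin> EH)"
    using transversal_subset[OF f] unfolding independent_set_def transversal_def by blast
  also have "\<dots> \<longleftrightarrow> ?proper \<and> ?cross"
  proof (intro iffI conjI)
    assume indep: "\<forall>u\<in>V. \<forall>v\<in>V. {lab u (f u), lab v (f v)} \<notin> EH"
    show ?proper unfolding proper_colorings_def
    proof (intro CollectI conjI f allI impI notI)
      fix u v assume uv: "{u, v} \<in> F" "f u = f v"
      have V: "u \<in> V" "v \<in> V" using simple_graph_edgeD[OF G] F uv(1) by blast+
      then have "{lab u (f u), lab v (f v)} \<in> EH" using natural[OF uv(1)] f uv(2) by auto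
      then show False using indep V by blast
    qed
    show ?cross using indep simple_graph_edgeD[OF G] by blast
  next
    assume "?proper \<and> ?cross"
    then have proper: ?proper and cross: ?cross by blast+
    show "\<forall>u\<in>V. \<forall>v\<in>V. {lab u (f u), lab v (f v)} \<notin> EH"
    proof (intro ballI notI)
      fix u v assume uv: "u \<in> V" "v \<in> V" and e: "{lab u (f u), lab v (f v)} \<in> EH"
      have lt: "f u < m" "f v < m" using f uv by auto
      have "u \<noteq> v" using e simple_graph_no_loop[OF is_coverD(1)[OF cover]] by auto
      then have E: "{u, v} \<in> E"
        using cover_edge_lifts[OF uv _ _ e] lab_in_fiber uv lt by blast
      then have "{u, v} \<in> F" using cross e by blast
      then have "f u \<noteq> f v" and "{lab u (f u), lab v (f u)} \<in> EH"
        using proper natural lt by (auto simp: proper_colorings_def)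
      moreover have "lab v (f v) = lab v (f u)"
      proof (rule cover_matching[of v u])
        show "{v, u} \<in> E" using E by (simp add: insert_commute)
        show "{lab v (f v), lab u (f u)} \<in> EH" "{lab v (f u), lab u (f u)} \<in> EH"
          using e \<open>{lab u (f u), lab v (f u)} \<in> EH\<close> by (simp_all add: insert_commute)
      qed (use uv lt \<open>u \<noteq> v\<close> lab_in_fiber in auto)
      ultimately show False using lab_inj[OF uv(2) lt(2) lt(1)] by simp
    qed
  qed
  finally show ?thesis .
qed

lemma P_DP_eq_card_proper_colorings:
  assumes G: "simple_graph V E" and F: "F \<subseteq> E"
    and natural: "\<And>u v j. {u, v} \<in> F \<Longrightarrow> j < m \<Longrightarrow> {lab u j, lab v j} \<in> EH"
  shows "P_DP V VH EH =
    card {f \<in> proper_colorings V F m. \<forall>u v. {u, v} \<in> E - F \<longrightarrow> {lab u (f u), lab v (f v)} \<notin> EH}"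
proof -
  have fin: "finite V" using G by (simp add: simple_graph_def)
  have "{f \<in> V \<rightarrow>\<^sub>E {..<m}. independent_set VH EH (transversal lab V f)} =
    {f \<in> proper_colorings V F m. \<forall>u v. {u, v} \<in> E - F \<longrightarrow> {lab u (f u), lab v (f v)} \<notin> EH}"
    using independent_transversal_iff[OF G F natural] by (auto simp: proper_colorings_def)
  then show ?thesis
    using bij_betw_same_card[OF bij_betw_transversal_dp_colorings[OF fin]] by (simp add: P_DP_def)
qed

end

end

section \<open>Sums over equality types of colour triples\<close>

definition by_eq_type :: "'x \<Rightarrow> 'x \<Rightarrow> 'x \<Rightarrow> 'x \<Rightarrow> 'x \<Rightarrow> nat \<Rightarrow> nat \<Rightarrow> nat \<Rightarrow> 'x" where
  "by_eq_type x\<^sub>1 x\<^sub>2 x\<^sub>3 x\<^sub>4 x\<^sub>5 i j k =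
     (if i = j then (if j = k then x\<^sub>1 else x\<^sub>2)
      else if j = k then x\<^sub>3 else if i = k then x\<^sub>4 else x\<^sub>5)"

lemma unique_candidate_below:
  assumes "0 < m" "\<And>i i'. i < m \<Longrightarrow> i' < m \<Longrightarrow> P i \<Longrightarrow> P i' \<Longrightarrow> i = i'"
  shows "\<exists>i<(m::nat). \<forall>i'<m. P i' \<longrightarrow> i' = i"
proof (cases "\<exists>i<m. P i")
  case True
  then show ?thesis using assms(2) by blast
next
  case False
  then show ?thesis using assms(1) by blast
qed

lemma sum_lessThan_remove1:
  assumes "a < m" "\<And>k. k < m \<Longrightarrow> k \<noteq> a \<Longrightarrow> g k = (c::real)"
  shows "(\<Sum>k<m. g k) = g a + (real m - 1) * c"
proof -
  have "(\<Sum>k<m. g k) = g a + (\<Sum>k\<in>{..<m} - {a}. g k)"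
    using assms(1) by (simp add: sum.remove)
  also have "(\<Sum>k\<in>{..<m} - {a}. g k) = (\<Sum>k\<in>{..<m} - {a}. c)"
    using assms(2) by (intro sum.cong) auto
  finally show ?thesis using assms(1) by (simp add: of_nat_diff)
qed

lemma sum_lessThan_remove2:
  assumes "a < m" "b < m" "a \<noteq> b" "\<And>k. k < m \<Longrightarrow> k \<noteq> a \<Longrightarrow> k \<noteq> b \<Longrightarrow> g k = (c::real)"
  shows "(\<Sum>k<m. g k) = g a + g b + (real m - 2) * c"
proof -
  have "(\<Sum>k<m. g k) = g a + g b + (\<Sum>k\<in>{..<m} - {a} - {b}. g k)"
    using assms(1-3) by (simp add: sum.remove[of _ a] sum.remove[of _ b])
  also have "(\<Sum>k\<in>{..<m} - {a} - {b}. g k) = (\<Sum>k\<in>{..<m} - {a} - {b}. c)"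
    using assms(4) by (intro sum.cong) auto
  finally show ?thesis using assms(1-3) by (simp add: of_nat_diff)
qed

lemma sum_by_eq_type:
  assumes "\<And>i j k. i < m \<Longrightarrow> j < m \<Longrightarrow> k < m \<Longrightarrow> g i j k = by_eq_type x\<^sub>1 x\<^sub>2 x\<^sub>3 x\<^sub>4 x\<^sub>5 i j k"
  shows "(\<Sum>i<m. \<Sum>j<m. \<Sum>k<m. g i j k) = real m * x\<^sub>1
     + real m * (real m - 1) * (x\<^sub>2 + x\<^sub>3 + x\<^sub>4) + real m * (real m - 1) * (real m - 2) * (x\<^sub>5::real)"
proof -
  have inner: "(\<Sum>k<m. g i j k) =
      (if i = j then x\<^sub>1 + (real m - 1) * x\<^sub>2 else x\<^sub>4 + x\<^sub>3 + (real m - 2) * x\<^sub>5)"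
    if "i < m" "j < m" for i j
  proof (cases "i = j")
    case True
    then show ?thesis
      using that by (subst sum_lessThan_remove1[of i _ _ x\<^sub>2]) (auto simp: assms by_eq_type_def)
  next
    case False
    then show ?thesis
      using that by (subst sum_lessThan_remove2[of i m j _ x\<^sub>5]) (auto simp: assms by_eq_type_def)
  qed
  have "(\<Sum>j<m. \<Sum>k<m. g i j k) =
      x\<^sub>1 + (real m - 1) * x\<^sub>2 + (real m - 1) * (x\<^sub>4 + x\<^sub>3 + (real m - 2) * x\<^sub>5)" if "i < m" for i
    using that by (subst sum_lessThan_remove1[of i]) (auto simp: inner)
  then have "(\<Sum>i<m. \<Sum>j<m. \<Sum>k<m. g i j k) =
      real m * (x\<^sub>1 + (real m - 1) * x\<^sub>2 + (real m - 1) * (x\<^sub>4 + x\<^sub>3 + (real m - 2) * x\<^sub>5))"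
    by simp
  then show ?thesis by (simp add: algebra_simps)
qed

section \<open>Colourings of \<open>G\<close> with the path \<open>a\<^sub>1a\<^sub>2a\<^sub>3\<close> removed\<close>

locale two_edge_path =
  fixes V :: "'a set" and E :: "'a set set" and m :: nat and a\<^sub>1 a\<^sub>2 a\<^sub>3 :: 'a
  assumes graph: "simple_graph V E" and m: "m \<ge> 3"
    and edges: "{a\<^sub>1, a\<^sub>2} \<in> E" "{a\<^sub>2, a\<^sub>3} \<in> E"
    and ends_distinct: "a\<^sub>1 \<noteq> a\<^sub>3" and ends_nonadjacent: "{a\<^sub>1, a\<^sub>3} \<notin> E"
begin

lemma path_vertices: "a\<^sub>1 \<in> V" "a\<^sub>2 \<in> V" "a\<^sub>3 \<in> V" "a\<^sub>1 \<noteq> a\<^sub>2" "a\<^sub>2 \<noteq> a\<^sub>3"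
  using simple_graph_edgeD[OF graph edges(1)] simple_graph_edgeD[OF graph edges(2)] by auto

definition "E\<^sub>0 = E - {{a\<^sub>1, a\<^sub>2}, {a\<^sub>2, a\<^sub>3}}"
definition "C\<^sub>0 = proper_colorings V E\<^sub>0 m"

lemma graph_E\<^sub>0: "simple_graph V E\<^sub>0"
  using graph unfolding simple_graph_def E\<^sub>0_def by blast

lemma finite_C\<^sub>0: "finite C\<^sub>0"
proof (rule finite_subset)
  show "C\<^sub>0 \<subseteq> V \<rightarrow>\<^sub>E {..<m}" by (auto simp: C\<^sub>0_def proper_colorings_def)
  show "finite (V \<rightarrow>\<^sub>E {..<m})" using graph by (simp add: simple_graph_def finite_PiE)
qed

lemma C\<^sub>0_less: "f \<in> C\<^sub>0 \<Longrightarrow> v \<in> V \<Longrightarrow> f v < m"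
  by (auto simp: C\<^sub>0_def proper_colorings_def)

definition w :: "nat \<Rightarrow> nat \<Rightarrow> nat \<Rightarrow> real" where
  "w i j k = real (card {f \<in> C\<^sub>0. f a\<^sub>1 = i \<and> f a\<^sub>2 = j \<and> f a\<^sub>3 = k})"

lemma w_by_eq_type:
  assumes "i < m" "j < m" "k < m"
  shows "w i j k = by_eq_type (w 0 0 0) (w 0 0 1) (w 0 1 1) (w 0 1 0) (w 0 1 2) i j k"
proof -
  have eq: "w i j k = w i' j' k'"
    if "i' < m" "j' < m" "k' < m" "i = j \<longleftrightarrow> i' = j'" "j = k \<longleftrightarrow> j' = k'" "i = k \<longleftrightarrow> i' = k'"
    for i' j' k'
    using card_proper_colorings_fixed_eq_type[OF graph_E\<^sub>0 path_vertices(1-3) assms that]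
    unfolding w_def C\<^sub>0_def by simp
  have "0 < m" "1 < m" "2 < m" using m by auto
  then show ?thesis
    using eq[of 0 0 0] eq[of 0 0 1] eq[of 0 1 1] eq[of 0 1 0] eq[of 0 1 2]
    by (auto simp: by_eq_type_def)
qed

text \<open>The letters record the colour pattern of \<open>(a\<^sub>1, a\<^sub>2, a\<^sub>3)\<close>.\<close>

abbreviation "w_aaa \<equiv> w 0 0 0"
abbreviation "w_aab \<equiv> w 0 0 1"
abbreviation "w_abb \<equiv> w 0 1 1"
abbreviation "w_aba \<equiv> w 0 1 0"
abbreviation "w_abc \<equiv> w 0 1 2"

lemma card_C\<^sub>0_fibers:
  assumes "v \<in> V"
  shows "card {f \<in> C\<^sub>0. P f} = (\<Sum>i<m. card {f \<in> C\<^sub>0. P f \<and> f v = i})"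
proof -
  have "card {f \<in> C\<^sub>0. P f} = (\<Sum>i\<in>{..<m}. card {f \<in> {f \<in> C\<^sub>0. P f}. f v = i})"
    using sum.group[of "{f \<in> C\<^sub>0. P f}" "{..<m}" "\<lambda>f. f v" "\<lambda>_. 1::nat"] finite_C\<^sub>0 C\<^sub>0_less assms
    by (auto simp: image_subset_iff)
  then show ?thesis by (simp add: conj_ac)
qed

lemma card_C\<^sub>0_filter:
  "real (card {f \<in> C\<^sub>0. Q (f a\<^sub>1) (f a\<^sub>2) (f a\<^sub>3)}) =
     (\<Sum>i<m. \<Sum>j<m. \<Sum>k<m. if Q i j k then w i j k else 0)"
proof -
  have "card {f \<in> C\<^sub>0. Q (f a\<^sub>1) (f a\<^sub>2) (f a\<^sub>3)} =
    (\<Sum>i<m. \<Sum>j<m. \<Sum>k<m. card {f \<in> C\<^sub>0. ((Q (f a\<^sub>1) (f a\<^sub>2) (f a\<^sub>3) \<and> f a\<^sub>1 = i) \<and> f a\<^sub>2 = j) \<and> f a\<^sub>3 = k})"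
    by (subst card_C\<^sub>0_fibers[OF path_vertices(1)], intro sum.cong refl,
        subst card_C\<^sub>0_fibers[OF path_vertices(2)], intro sum.cong refl,
        rule card_C\<^sub>0_fibers[OF path_vertices(3)])
  then have "real (card {f \<in> C\<^sub>0. Q (f a\<^sub>1) (f a\<^sub>2) (f a\<^sub>3)}) = (\<Sum>i<m. \<Sum>j<m. \<Sum>k<m.
      real (card {f \<in> C\<^sub>0. ((Q (f a\<^sub>1) (f a\<^sub>2) (f a\<^sub>3) \<and> f a\<^sub>1 = i) \<and> f a\<^sub>2 = j) \<and> f a\<^sub>3 = k}))"
    by (simp only: of_nat_sum)
  also have "\<dots> = (\<Sum>i<m. \<Sum>j<m. \<Sum>k<m. if Q i j k then w i j k else 0)"
    unfolding w_def
    by (intro sum.cong refl) (auto intro!: arg_cong[where f = card] simp: card_eq_0_iff)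
  finally show ?thesis .
qed

lemma card_C\<^sub>0_by_eq_type:
  "real (card {f \<in> C\<^sub>0. by_eq_type b\<^sub>1 b\<^sub>2 b\<^sub>3 b\<^sub>4 b\<^sub>5 (f a\<^sub>1) (f a\<^sub>2) (f a\<^sub>3)}) =
    real m * (if b\<^sub>1 then w_aaa else 0)
    + real m * (real m - 1) * ((if b\<^sub>2 then w_aab else 0) + (if b\<^sub>3 then w_abb else 0) + (if b\<^sub>4 then w_aba else 0))
    + real m * (real m - 1) * (real m - 2) * (if b\<^sub>5 then w_abc else 0)"
  unfolding card_C\<^sub>0_filter
proof (rule sum_by_eq_type)
  fix i j k assume lt: "i < m" "j < m" "k < m"
  show "(if by_eq_type b\<^sub>1 b\<^sub>2 b\<^sub>3 b\<^sub>4 b\<^sub>5 i j k then w i j k else 0) = by_eq_type (if b\<^sub>1 then w_aaa else 0)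
      (if b\<^sub>2 then w_aab else 0) (if b\<^sub>3 then w_abb else 0) (if b\<^sub>4 then w_aba else 0)
      (if b\<^sub>5 then w_abc else 0) i j k"
    unfolding w_by_eq_type[OF lt] by (simp add: by_eq_type_def)
qed

lemma E_decompose:
  "E = E\<^sub>0 \<union> {{a\<^sub>1, a\<^sub>2}} \<union> {{a\<^sub>2, a\<^sub>3}}"
  "E - {{a\<^sub>1, a\<^sub>2}} = E\<^sub>0 \<union> {{a\<^sub>2, a\<^sub>3}}"
  "E - {{a\<^sub>2, a\<^sub>3}} = E\<^sub>0 \<union> {{a\<^sub>1, a\<^sub>2}}"
  "E \<union> {{a\<^sub>1, a\<^sub>3}} = E\<^sub>0 \<union> {{a\<^sub>1, a\<^sub>2}} \<union> {{a\<^sub>2, a\<^sub>3}} \<union> {{a\<^sub>1, a\<^sub>3}}"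
  using edges ends_distinct path_vertices by (auto simp: E\<^sub>0_def doubleton_eq_iff)

lemma chrom_poly_by_eq_type:
  assumes "proper_colorings V F m = {f \<in> C\<^sub>0. by_eq_type b\<^sub>1 b\<^sub>2 b\<^sub>3 b\<^sub>4 b\<^sub>5 (f a\<^sub>1) (f a\<^sub>2) (f a\<^sub>3)}"
  shows "real (chrom_poly V F m) = real m * (if b\<^sub>1 then w_aaa else 0)
    + real m * (real m - 1) * ((if b\<^sub>2 then w_aab else 0) + (if b\<^sub>3 then w_abb else 0) + (if b\<^sub>4 then w_aba else 0))
    + real m * (real m - 1) * (real m - 2) * (if b\<^sub>5 then w_abc else 0)"
  unfolding chrom_poly_def assms by (rule card_C\<^sub>0_by_eq_type)

lemma chrom_poly_E\<^sub>0: "real (chrom_poly V E\<^sub>0 m) = real m * w_aaa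
    + real m * (real m - 1) * (w_aab + w_abb + w_aba) + real m * (real m - 1) * (real m - 2) * w_abc"
  using chrom_poly_by_eq_type[of E\<^sub>0 True True True True True]
  by (simp add: C\<^sub>0_def by_eq_type_def)

lemma chrom_poly_E: "real (chrom_poly V E m) =
    real m * (real m - 1) * w_aba + real m * (real m - 1) * (real m - 2) * w_abc"
proof -
  have "proper_colorings V E m = proper_colorings V (E\<^sub>0 \<union> {{a\<^sub>1, a\<^sub>2}} \<union> {{a\<^sub>2, a\<^sub>3}}) m"
    using E_decompose(1) by (rule arg_cong)
  also have "\<dots> = {f \<in> C\<^sub>0. by_eq_type False False False True True (f a\<^sub>1) (f a\<^sub>2) (f a\<^sub>3)}"
    by (auto simp: C\<^sub>0_def proper_colorings_insert_edge by_eq_type_def)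
  finally show ?thesis by (rule chrom_poly_by_eq_type[THEN trans]) simp
qed

lemma chrom_poly_E_minus_e\<^sub>1: "real (chrom_poly V (E - {{a\<^sub>1, a\<^sub>2}}) m) =
    real m * (real m - 1) * (w_aab + w_aba) + real m * (real m - 1) * (real m - 2) * w_abc"
proof -
  have "proper_colorings V (E - {{a\<^sub>1, a\<^sub>2}}) m = proper_colorings V (E\<^sub>0 \<union> {{a\<^sub>2, a\<^sub>3}}) m"
    using E_decompose(2) by (rule arg_cong)
  also have "\<dots> = {f \<in> C\<^sub>0. by_eq_type False True False True True (f a\<^sub>1) (f a\<^sub>2) (f a\<^sub>3)}"
    by (auto simp: C\<^sub>0_def proper_colorings_insert_edge by_eq_type_def)
  finally show ?thesis by (rule chrom_poly_by_eq_type[THEN trans]) simp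
qed

lemma chrom_poly_E_minus_e\<^sub>2: "real (chrom_poly V (E - {{a\<^sub>2, a\<^sub>3}}) m) =
    real m * (real m - 1) * (w_abb + w_aba) + real m * (real m - 1) * (real m - 2) * w_abc"
proof -
  have "proper_colorings V (E - {{a\<^sub>2, a\<^sub>3}}) m = proper_colorings V (E\<^sub>0 \<union> {{a\<^sub>1, a\<^sub>2}}) m"
    using E_decompose(3) by (rule arg_cong)
  also have "\<dots> = {f \<in> C\<^sub>0. by_eq_type False False True True True (f a\<^sub>1) (f a\<^sub>2) (f a\<^sub>3)}"
    by (auto simp: C\<^sub>0_def proper_colorings_insert_edge by_eq_type_def)
  finally show ?thesis by (rule chrom_poly_by_eq_type[THEN trans]) simp
qed

lemma chrom_poly_E_plus: "real (chrom_poly V (E \<union> {{a\<^sub>1, a\<^sub>3}}) m) =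
    real m * (real m - 1) * (real m - 2) * w_abc"
proof -
  have "proper_colorings V (E \<union> {{a\<^sub>1, a\<^sub>3}}) m =
      proper_colorings V (E\<^sub>0 \<union> {{a\<^sub>1, a\<^sub>2}} \<union> {{a\<^sub>2, a\<^sub>3}} \<union> {{a\<^sub>1, a\<^sub>3}}) m"
    using E_decompose(4) by (rule arg_cong)
  also have "\<dots> = {f \<in> C\<^sub>0. by_eq_type False False False False True (f a\<^sub>1) (f a\<^sub>2) (f a\<^sub>3)}"
    by (auto simp: C\<^sub>0_def proper_colorings_insert_edge by_eq_type_def)
  finally show ?thesis by (rule chrom_poly_by_eq_type[THEN trans]) simp
qed

text \<open>The quantities \<open>A\<^sub>1, \<dots>, A\<^sub>5\<close> of the theorem (see \<open>A_eq_chrom_poly\<close>), in terms of the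
  colour-pattern counts.\<close>

definition "A\<^sub>1 = real m * w_aaa + real m * (real m - 1) * (w_aab + w_abb)"
definition "A\<^sub>2 = real m * w_aaa + real m * (real m - 1) * w_aab
  + real m * w_aba + real m * (real m - 2) * w_abc"
definition "A\<^sub>3 = real m * w_aaa + real m * (real m - 1) * w_abb
  + real m * w_aba + real m * (real m - 2) * w_abc"
definition "A\<^sub>4 = real m * (w_aab + w_abb + w_aba) + 2 * real m * (real m - 2) * w_abc"
definition "A\<^sub>5 = real m * (w_aab + w_abb + 2 * w_aba) + real m * (2 * real m - 5) * w_abc"
definition "A_max = Max {A\<^sub>1, A\<^sub>2, A\<^sub>3, A\<^sub>4, A\<^sub>5}"

lemmas A_defs = A\<^sub>1_def A\<^sub>2_def A\<^sub>3_def A\<^sub>4_def A\<^sub>5_def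

lemma A_eq_chrom_poly:
  defines "P\<^sub>0 \<equiv> real (chrom_poly V E\<^sub>0 m)" and "P \<equiv> real (chrom_poly V E m)"
    and "P\<^sub>1 \<equiv> real (chrom_poly V (E - {{a\<^sub>1, a\<^sub>2}}) m)" and "P\<^sub>2 \<equiv> real (chrom_poly V (E - {{a\<^sub>2, a\<^sub>3}}) m)"
    and "Ps \<equiv> real (chrom_poly V (E \<union> {{a\<^sub>1, a\<^sub>3}}) m)"
  shows "A\<^sub>1 = P\<^sub>0 - P" "A\<^sub>2 = P\<^sub>0 - P\<^sub>2 + P / (real m - 1)" "A\<^sub>3 = P\<^sub>0 - P\<^sub>1 + P / (real m - 1)"
    "A\<^sub>4 = (P\<^sub>1 + P\<^sub>2 + Ps - P) / (real m - 1)"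
    "A\<^sub>5 = (P\<^sub>1 + P\<^sub>2 - Ps / (real m - 2)) / (real m - 1)"
proof -
  have m1: "real m - 1 \<noteq> 0" and m2: "real m - 2 \<noteq> 0" using m by auto
  note chrom = chrom_poly_E\<^sub>0 chrom_poly_E chrom_poly_E_minus_e\<^sub>1 chrom_poly_E_minus_e\<^sub>2 chrom_poly_E_plus
  show "A\<^sub>1 = P\<^sub>0 - P" "A\<^sub>2 = P\<^sub>0 - P\<^sub>2 + P / (real m - 1)" "A\<^sub>3 = P\<^sub>0 - P\<^sub>1 + P / (real m - 1)"
    "A\<^sub>4 = (P\<^sub>1 + P\<^sub>2 + Ps - P) / (real m - 1)"
    unfolding assms A_defs chrom using m1 by (simp_all add: field_simps)
  have "Ps / (real m - 2) = real m * (real m - 1) * w_abc"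
    unfolding assms chrom using m2 by simp
  moreover have "P\<^sub>1 + P\<^sub>2 - real m * (real m - 1) * w_abc = (real m - 1) * A\<^sub>5"
    unfolding assms A_defs chrom by (simp add: algebra_simps)
  ultimately show "A\<^sub>5 = (P\<^sub>1 + P\<^sub>2 - Ps / (real m - 2)) / (real m - 1)"
    using m1 by simp
qed

definition conflicts :: "nat \<Rightarrow> nat \<Rightarrow> nat \<Rightarrow> real" where
  "conflicts i j k = real (card {f \<in> C\<^sub>0. f a\<^sub>2 = j \<and> (f a\<^sub>1 = i \<or> f a\<^sub>3 = k)})"

lemma sum_w_last:
  assumes "i < m" "j < m"
  shows "(\<Sum>c<m. w i j c) =
    (if i = j then w_aaa + (real m - 1) * w_aab else w_aba + w_abb + (real m - 2) * w_abc)"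
proof (cases "i = j")
  case True
  then show ?thesis
    using assms by (subst sum_lessThan_remove1[of i _ _ w_aab])
      (auto simp: w_by_eq_type[of i j] w_by_eq_type[of j j] by_eq_type_def)
next
  case False
  then show ?thesis
    using assms by (subst sum_lessThan_remove2[of i m j _ w_abc])
      (auto simp: w_by_eq_type[of i j] by_eq_type_def)
qed

lemma sum_w_first:
  assumes "j < m" "k < m"
  shows "(\<Sum>c<m. w c j k) =
    (if j = k then w_aaa + (real m - 1) * w_abb else w_aab + w_aba + (real m - 2) * w_abc)"
proof (cases "j = k")
  case True
  then show ?thesis
    using assms by (subst sum_lessThan_remove1[of j _ _ w_abb])
      (auto simp: w_by_eq_type[of _ j k] w_by_eq_type[of _ k k] by_eq_type_def)
next
  case False
  then show ?thesis
    using assms by (subst sum_lessThan_remove2[of j m k _ w_abc])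
      (auto simp: w_by_eq_type[of _ j k] by_eq_type_def)
qed

lemma conflicts_eq_sums: "conflicts i j k = (\<Sum>c<m. w i j c) + (\<Sum>c<m. w c j k) - w i j k"
proof -
  let ?A = "{f \<in> C\<^sub>0. f a\<^sub>1 = i \<and> f a\<^sub>2 = j}" and ?B = "{f \<in> C\<^sub>0. f a\<^sub>2 = j \<and> f a\<^sub>3 = k}"
  have A: "real (card ?A) = (\<Sum>c<m. w i j c)"
    using card_C\<^sub>0_fibers[OF path_vertices(3), of "\<lambda>f. f a\<^sub>1 = i \<and> f a\<^sub>2 = j"]
    by (simp add: w_def of_nat_sum conj_ac)
  have B: "real (card ?B) = (\<Sum>c<m. w c j k)"
    using card_C\<^sub>0_fibers[OF path_vertices(1), of "\<lambda>f. f a\<^sub>2 = j \<and> f a\<^sub>3 = k"]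
    by (simp add: w_def of_nat_sum conj_ac)
  have "?A \<union> ?B = {f \<in> C\<^sub>0. f a\<^sub>2 = j \<and> (f a\<^sub>1 = i \<or> f a\<^sub>3 = k)}"
    and "?A \<inter> ?B = {f \<in> C\<^sub>0. f a\<^sub>1 = i \<and> f a\<^sub>2 = j \<and> f a\<^sub>3 = k}" by auto
  moreover have "card (?A \<union> ?B) + card (?A \<inter> ?B) = card ?A + card ?B"
    using finite_C\<^sub>0 by (intro card_Un_Int [symmetric]) auto
  ultimately have "conflicts i j k + w i j k = real (card ?A) + real (card ?B)"
    unfolding conflicts_def w_def by (simp only: of_nat_add[symmetric])
  with A B show ?thesis by linarith
qed

lemma m_times_conflicts:
  assumes "i < m" "j < m" "k < m"
  shows "real m * conflicts i j k = by_eq_type A\<^sub>1 A\<^sub>2 A\<^sub>3 A\<^sub>4 A\<^sub>5 i j k"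
  unfolding conflicts_eq_sums sum_w_last[OF assms(1,2)] sum_w_first[OF assms(2,3)]
    w_by_eq_type[OF assms] A_defs by_eq_type_def
  by (cases "i = j"; cases "j = k"; cases "i = k") (simp_all add: algebra_simps)

lemma card_C\<^sub>0_crossing:
  "real (card {f \<in> C\<^sub>0. f a\<^sub>1 = I (f a\<^sub>2) \<or> f a\<^sub>3 = K (f a\<^sub>2)}) = (\<Sum>j<m. conflicts (I j) j (K j))"
proof -
  have "card {f \<in> C\<^sub>0. f a\<^sub>1 = I (f a\<^sub>2) \<or> f a\<^sub>3 = K (f a\<^sub>2)} =
      (\<Sum>j<m. card {f \<in> C\<^sub>0. (f a\<^sub>1 = I (f a\<^sub>2) \<or> f a\<^sub>3 = K (f a\<^sub>2)) \<and> f a\<^sub>2 = j})"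
    by (rule card_C\<^sub>0_fibers[OF path_vertices(2)])
  also have "\<dots> = (\<Sum>j<m. card {f \<in> C\<^sub>0. f a\<^sub>2 = j \<and> (f a\<^sub>1 = I j \<or> f a\<^sub>3 = K j)})"
    by (intro sum.cong refl arg_cong[where f = card]) auto
  finally show ?thesis by (simp add: conflicts_def of_nat_sum)
qed

lemma conflicts_le_A_max:
  assumes "i < m" "j < m" "k < m"
  shows "conflicts i j k \<le> A_max / real m"
proof -
  have "by_eq_type A\<^sub>1 A\<^sub>2 A\<^sub>3 A\<^sub>4 A\<^sub>5 i j k \<le> A_max"
    unfolding A_max_def by_eq_type_def by (auto intro: Max_ge)
  then show ?thesis
    using m_times_conflicts[OF assms] m by (simp add: pos_le_divide_eq mult.commute)
qed

lemma card_C\<^sub>0_crossing_le: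
  assumes R\<^sub>1: "\<And>i i' j. i < m \<Longrightarrow> i' < m \<Longrightarrow> j < m \<Longrightarrow> R\<^sub>1 i j \<Longrightarrow> R\<^sub>1 i' j \<Longrightarrow> i = i'"
    and R\<^sub>2: "\<And>j k k'. j < m \<Longrightarrow> k < m \<Longrightarrow> k' < m \<Longrightarrow> R\<^sub>2 j k \<Longrightarrow> R\<^sub>2 j k' \<Longrightarrow> k = k'"
  shows "real (card {f \<in> C\<^sub>0. R\<^sub>1 (f a\<^sub>1) (f a\<^sub>2) \<or> R\<^sub>2 (f a\<^sub>2) (f a\<^sub>3)}) \<le> A_max"
proof -
  have "\<forall>j. \<exists>i. j < m \<longrightarrow> i < m \<and> (\<forall>i'<m. R\<^sub>1 i' j \<longrightarrow> i' = i)"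
    using unique_candidate_below[of m "\<lambda>i. R\<^sub>1 i _"] R\<^sub>1 m by auto
  from choice[OF this] obtain I where I: "\<forall>j. j < m \<longrightarrow> I j < m \<and> (\<forall>i<m. R\<^sub>1 i j \<longrightarrow> i = I j)" ..
  have "\<forall>j. \<exists>k. j < m \<longrightarrow> k < m \<and> (\<forall>k'<m. R\<^sub>2 j k' \<longrightarrow> k' = k)"
    using unique_candidate_below[of m "R\<^sub>2 _"] R\<^sub>2 m by auto
  from choice[OF this] obtain K where K: "\<forall>j. j < m \<longrightarrow> K j < m \<and> (\<forall>k<m. R\<^sub>2 j k \<longrightarrow> k = K j)" ..
  have "{f \<in> C\<^sub>0. R\<^sub>1 (f a\<^sub>1) (f a\<^sub>2) \<or> R\<^sub>2 (f a\<^sub>2) (f a\<^sub>3)} \<subseteq> {f \<in> C\<^sub>0. f a\<^sub>1 = I (f a\<^sub>2) \<or> f a\<^sub>3 = K (f a\<^sub>2)}"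
  proof (rule subsetI)
    fix f assume f: "f \<in> {f \<in> C\<^sub>0. R\<^sub>1 (f a\<^sub>1) (f a\<^sub>2) \<or> R\<^sub>2 (f a\<^sub>2) (f a\<^sub>3)}"
    then have "f a\<^sub>1 < m" "f a\<^sub>2 < m" "f a\<^sub>3 < m" using C\<^sub>0_less path_vertices by auto
    then show "f \<in> {f \<in> C\<^sub>0. f a\<^sub>1 = I (f a\<^sub>2) \<or> f a\<^sub>3 = K (f a\<^sub>2)}" using f I K by auto
  qed
  then have "real (card {f \<in> C\<^sub>0. R\<^sub>1 (f a\<^sub>1) (f a\<^sub>2) \<or> R\<^sub>2 (f a\<^sub>2) (f a\<^sub>3)}) \<le>
      real (card {f \<in> C\<^sub>0. f a\<^sub>1 = I (f a\<^sub>2) \<or> f a\<^sub>3 = K (f a\<^sub>2)})"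
    using finite_C\<^sub>0 by (simp add: card_mono)
  also have "\<dots> = (\<Sum>j<m. conflicts (I j) j (K j))" by (rule card_C\<^sub>0_crossing)
  also have "\<dots> \<le> (\<Sum>j<m. A_max / real m)"
    using I K by (intro sum_mono conflicts_le_A_max) auto
  also have "\<dots> = A_max" using m by simp
  finally show ?thesis .
qed

lemma card_C\<^sub>0_crossing_eq:
  assumes "\<And>j. j < m \<Longrightarrow> I j < m" "\<And>j. j < m \<Longrightarrow> K j < m"
    and "\<And>j. j < m \<Longrightarrow> by_eq_type A\<^sub>1 A\<^sub>2 A\<^sub>3 A\<^sub>4 A\<^sub>5 (I j) j (K j) = A"
  shows "real (card {f \<in> C\<^sub>0. f a\<^sub>1 = I (f a\<^sub>2) \<or> f a\<^sub>3 = K (f a\<^sub>2)}) = A"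
proof -
  have "conflicts (I j) j (K j) = A / real m" if "j < m" for j
    using m_times_conflicts[of "I j" j "K j"] assms that m by (simp add: eq_divide_eq mult.commute)
  then show ?thesis unfolding card_C\<^sub>0_crossing using m by simp
qed

lemma P_DP_eq_card_C\<^sub>0:
  assumes cover: "is_cover V E L VH EH" and lab: "\<And>v. v \<in> V \<Longrightarrow> bij_betw (lab v) {..<m} (L v)"
    and natural: "\<And>u v j. {u, v} \<in> E\<^sub>0 \<Longrightarrow> j < m \<Longrightarrow> {lab u j, lab v j} \<in> EH"
  shows "real (P_DP V VH EH) = real (card C\<^sub>0) - real (card
    {f \<in> C\<^sub>0. {lab a\<^sub>1 (f a\<^sub>1), lab a\<^sub>2 (f a\<^sub>2)} \<in> EH \<or> {lab a\<^sub>2 (f a\<^sub>2), lab a\<^sub>3 (f a\<^sub>3)} \<in> EH})"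
proof -
  let ?crossing = "\<lambda>f. {lab a\<^sub>1 (f a\<^sub>1), lab a\<^sub>2 (f a\<^sub>2)} \<in> EH \<or> {lab a\<^sub>2 (f a\<^sub>2), lab a\<^sub>3 (f a\<^sub>3)} \<in> EH"
  have "E - E\<^sub>0 = {{a\<^sub>1, a\<^sub>2}, {a\<^sub>2, a\<^sub>3}}" using edges by (auto simp: E\<^sub>0_def)
  then have cross: "(\<forall>u v. {u, v} \<in> E - E\<^sub>0 \<longrightarrow> {lab u (f u), lab v (f v)} \<notin> EH) \<longleftrightarrow> \<not> ?crossing f"
    for f by (auto simp: doubleton_eq_iff insert_commute)
  have "P_DP V VH EH = card {f \<in> proper_colorings V E\<^sub>0 m.
      \<forall>u v. {u, v} \<in> E - E\<^sub>0 \<longrightarrow> {lab u (f u), lab v (f v)} \<notin> EH}"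
    by (rule P_DP_eq_card_proper_colorings[OF cover lab graph _ natural]) (auto simp: E\<^sub>0_def)
  also have "\<dots> = card {f \<in> C\<^sub>0. \<not> ?crossing f}" unfolding C\<^sub>0_def cross ..
  finally have "P_DP V VH EH = card {f \<in> C\<^sub>0. \<not> ?crossing f}" .
  moreover have "card C\<^sub>0 = card {f \<in> C\<^sub>0. \<not> ?crossing f} + card {f \<in> C\<^sub>0. ?crossing f}"
    using finite_C\<^sub>0 by (subst card_Un_disjoint[symmetric]) (auto intro: arg_cong[where f = card])
  ultimately show ?thesis by simp
qed

lemma P_DP_lower_bound:
  assumes cover: "is_mfold_cover V E m L VH EH"
    and natural: "natural_bijection V E\<^sub>0 m L EH'" and "EH' \<subseteq> EH"
  shows "real (chrom_poly V E\<^sub>0 m) - A_max \<le> real (P_DP V VH EH)"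
proof -
  have cov: "is_cover V E L VH EH" using cover by (simp add: is_mfold_cover_def)
  from natural obtain lab where lab: "\<forall>v\<in>V. bij_betw (lab v) {..<m} (L v)"
    and lab_E': "\<forall>u\<in>V. \<forall>v\<in>V. {u, v} \<in> E\<^sub>0 \<longrightarrow> (\<forall>j<m. {lab u j, lab v j} \<in> EH')"
    unfolding natural_bijection_def by blast
  have lab_E\<^sub>0: "{lab u j, lab v j} \<in> EH" if "{u, v} \<in> E\<^sub>0" "j < m" for u v j
    using lab_E' simple_graph_edgeD[OF graph_E\<^sub>0 that(1)] that \<open>EH' \<subseteq> EH\<close> by blast
  note lab_in_fiber = lab_in_fiber[OF cov, of lab m, OF lab[rule_format]]
    and lab_inj = lab_inj[OF cov, of lab m, OF lab[rule_format]]
  have "real (card {f \<in> C\<^sub>0. {lab a\<^sub>1 (f a\<^sub>1), lab a\<^sub>2 (f a\<^sub>2)} \<in> EH \<or> {lab a\<^sub>2 (f a\<^sub>2), lab a\<^sub>3 (f a\<^sub>3)} \<in> EH})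
      \<le> A_max"
  proof (rule card_C\<^sub>0_crossing_le)
    fix i i' j assume lt: "i < m" "i' < m" "j < m"
      and e: "{lab a\<^sub>1 i, lab a\<^sub>2 j} \<in> EH" "{lab a\<^sub>1 i', lab a\<^sub>2 j} \<in> EH"
    have "lab a\<^sub>1 i = lab a\<^sub>1 i'"
      using cover_matching[OF cov path_vertices(1,2,4) edges(1) _ _ _ e] lab_in_fiber path_vertices lt
      by blast
    then show "i = i'" using lab_inj path_vertices(1) lt by blast
  next
    fix j k k' assume lt: "j < m" "k < m" "k' < m"
      and e: "{lab a\<^sub>2 j, lab a\<^sub>3 k} \<in> EH" "{lab a\<^sub>2 j, lab a\<^sub>3 k'} \<in> EH"
    have "{a\<^sub>3, a\<^sub>2} \<in> E" "a\<^sub>3 \<noteq> a\<^sub>2" using edges(2) path_vertices by (auto simp: insert_commute)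
    moreover have "{lab a\<^sub>3 k, lab a\<^sub>2 j} \<in> EH" "{lab a\<^sub>3 k', lab a\<^sub>2 j} \<in> EH"
      using e by (simp_all add: insert_commute)
    ultimately have "lab a\<^sub>3 k = lab a\<^sub>3 k'"
      using cover_matching[OF cov path_vertices(3,2)] lab_in_fiber path_vertices lt by blast
    then show "k = k'" using lab_inj path_vertices(3) lt by blast
  qed
  then show ?thesis
    using P_DP_eq_card_C\<^sub>0[OF cov, of lab, OF lab[rule_format] lab_E\<^sub>0]
    by (simp add: chrom_poly_def C\<^sub>0_def)
qed

subsection \<open>The extremal cover\<close>

text \<open>Fibres \<open>{v} \<times> {..<m}\<close>, colour-preserving matchings along the edges of
  \<open>E\<^sub>0\<close>, and the matchings along \<open>a\<^sub>1a\<^sub>2\<close> and \<open>a\<^sub>2a\<^sub>3\<close> twisted by \<open>I\<close> and \<open>K\<close>.\<close>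

fun twisted_adj :: "(nat \<Rightarrow> nat) \<Rightarrow> (nat \<Rightarrow> nat) \<Rightarrow> 'a \<times> nat \<Rightarrow> 'a \<times> nat \<Rightarrow> bool" where
  "twisted_adj I K (u, i) (v, j) \<longleftrightarrow> u \<in> V \<and> v \<in> V \<and> i < m \<and> j < m \<and>
     (u = v \<and> i \<noteq> j \<or> {u, v} \<in> E\<^sub>0 \<and> i = j \<or> u = a\<^sub>1 \<and> v = a\<^sub>2 \<and> i = I j \<or> u = a\<^sub>2 \<and> v = a\<^sub>3 \<and> j = K i)"

definition "twisted_edges I K = {{x, y} | x y. twisted_adj I K x y}"

lemma twisted_edges_iff: "{x, y} \<in> twisted_edges I K \<longleftrightarrow> twisted_adj I K x y \<or> twisted_adj I K y x"
proof
  assume "{x, y} \<in> twisted_edges I K"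
  then obtain x' y' where "{x, y} = {x', y'}" "twisted_adj I K x' y'"
    unfolding twisted_edges_def by blast
  then show "twisted_adj I K x y \<or> twisted_adj I K y x" by (auto simp: doubleton_eq_iff)
next
  assume "twisted_adj I K x y \<or> twisted_adj I K y x"
  then show "{x, y} \<in> twisted_edges I K"
  proof
    assume "twisted_adj I K x y"
    then show ?thesis unfolding twisted_edges_def by blast
  next
    assume "twisted_adj I K y x"
    then have "{y, x} \<in> twisted_edges I K" unfolding twisted_edges_def by blast
    then show ?thesis by (simp add: insert_commute)
  qed
qed

lemma path_edges_not_in_E\<^sub>0: "{a\<^sub>1, a\<^sub>2} \<notin> E\<^sub>0" "{a\<^sub>2, a\<^sub>1} \<notin> E\<^sub>0" "{a\<^sub>2, a\<^sub>3} \<notin> E\<^sub>0" "{a\<^sub>3, a\<^sub>2} \<notin> E\<^sub>0"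
  by (auto simp: E\<^sub>0_def insert_commute)

lemma twisted_edges_crossing:
  "i < m \<Longrightarrow> j < m \<Longrightarrow> {(a\<^sub>1, i), (a\<^sub>2, j)} \<in> twisted_edges I K \<longleftrightarrow> i = I j"
  "j < m \<Longrightarrow> k < m \<Longrightarrow> {(a\<^sub>2, j), (a\<^sub>3, k)} \<in> twisted_edges I K \<longleftrightarrow> k = K j"
  unfolding twisted_edges_iff using path_vertices path_edges_not_in_E\<^sub>0 ends_distinct by auto

lemma twisted_edges_natural: "{u, v} \<in> E\<^sub>0 \<Longrightarrow> j < m \<Longrightarrow> {(u, j), (v, j)} \<in> twisted_edges I K"
  unfolding twisted_edges_iff using simple_graph_edgeD[OF graph_E\<^sub>0] by auto

lemma twisted_adj_edge: "twisted_adj I K (u, i) (v, j) \<Longrightarrow> u = v \<or> {u, v} \<in> E"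
  using edges by (auto simp: E\<^sub>0_def)

lemma twisted_adj_irrefl: "\<not> twisted_adj I K x x"
  using simple_graph_no_loop[OF graph_E\<^sub>0] path_vertices by (cases x) auto

lemma twisted_matching:
  assumes "inj_on I {..<m}" "inj_on K {..<m}" "u \<noteq> v"
    and "twisted_adj I K (u, j) (v, l) \<or> twisted_adj I K (v, l) (u, j)"
    and "twisted_adj I K (u, j') (v, l') \<or> twisted_adj I K (v, l') (u, j')"
  shows "j = j' \<longleftrightarrow> l = l'"
proof -
  have lt: "j < m" "l < m" "j' < m" "l' < m" using assms(4,5) by auto
  then show ?thesis
    using assms path_vertices path_edges_not_in_E\<^sub>0 ends_distinct
      inj_onD[OF assms(1), of l l'] inj_onD[OF assms(1), of j j']
      inj_onD[OF assms(2), of j j'] inj_onD[OF assms(2), of l l']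
    by (auto simp: insert_commute)
qed

lemma twisted_cover:
  assumes I: "inj_on I {..<m}" and K: "inj_on K {..<m}"
  shows "is_mfold_cover V E m (\<lambda>v. {v} \<times> {..<m}) (V \<times> {..<m}) (twisted_edges I K)"
proof -
  have simple: "simple_graph (V \<times> {..<m}) (twisted_edges I K)"
    unfolding simple_graph_def twisted_edges_def
  proof (intro conjI ballI)
    show "finite (V \<times> {..<m})" using graph by (simp add: simple_graph_def)
    fix e assume "e \<in> {{x, y} | x y. twisted_adj I K x y}"
    then obtain x y where "e = {x, y}" "twisted_adj I K x y" by blast
    moreover have "x \<noteq> y" using \<open>twisted_adj I K x y\<close> twisted_adj_irrefl by metis
    ultimately show "\<exists>x y. e = {x, y} \<and> x \<noteq> y \<and> x \<in> V \<times> {..<m} \<and> y \<in> V \<times> {..<m}"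
      by (cases x, cases y) auto
  qed
  have between: "\<exists>j l. e = {(u, j), (v, l)} \<and>
      (twisted_adj I K (u, j) (v, l) \<or> twisted_adj I K (v, l) (u, j))"
    if mem: "e \<in> edges_between (twisted_edges I K) ({u} \<times> {..<m}) ({v} \<times> {..<m})" for e u v
  proof -
    obtain x y where e: "e = {x, y}" "{x, y} \<in> twisted_edges I K"
      and xy: "x \<in> {u} \<times> {..<m}" "y \<in> {v} \<times> {..<m}"
      using mem unfolding edges_between_def by blast
    from xy obtain j l where "x = (u, j)" "y = (v, l)" by blast
    with e show ?thesis unfolding twisted_edges_iff by blast
  qed
  have lifts: "u = v \<or> {u, v} \<in> E"
    if ne: "edges_between (twisted_edges I K) ({u} \<times> {..<m}) ({v} \<times> {..<m}) \<noteq> {}" for u v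
  proof -
    obtain e where "e \<in> edges_between (twisted_edges I K) ({u} \<times> {..<m}) ({v} \<times> {..<m})"
      using ne by blast
    then obtain j l where "twisted_adj I K (u, j) (v, l) \<or> twisted_adj I K (v, l) (u, j)"
      using between by blast
    then show ?thesis
      using twisted_adj_edge[of I K u j v l] twisted_adj_edge[of I K v l u j] by (auto simp: insert_commute)
  qed
  have matching: "e\<^sub>1 \<inter> e\<^sub>2 = {}"
    if uv: "{u, v} \<in> E" and ne: "e\<^sub>1 \<noteq> e\<^sub>2"
      and mem: "e\<^sub>1 \<in> edges_between (twisted_edges I K) ({u} \<times> {..<m}) ({v} \<times> {..<m})"
      "e\<^sub>2 \<in> edges_between (twisted_edges I K) ({u} \<times> {..<m}) ({v} \<times> {..<m})" for u v e\<^sub>1 e\<^sub>2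
  proof -
    have "u \<noteq> v" using simple_graph_edgeD[OF graph uv] by blast
    obtain j l where e\<^sub>1: "e\<^sub>1 = {(u, j), (v, l)}"
      and "twisted_adj I K (u, j) (v, l) \<or> twisted_adj I K (v, l) (u, j)"
      using between[OF mem(1)] by blast
    moreover obtain j' l' where e\<^sub>2: "e\<^sub>2 = {(u, j'), (v, l')}"
      and "twisted_adj I K (u, j') (v, l') \<or> twisted_adj I K (v, l') (u, j')"
      using between[OF mem(2)] by blast
    ultimately have "j = j' \<longleftrightarrow> l = l'" using twisted_matching[OF I K \<open>u \<noteq> v\<close>] by blast
    then show ?thesis using ne \<open>u \<noteq> v\<close> e\<^sub>1 e\<^sub>2 by auto
  qed
  have "is_cover V E (\<lambda>v. {v} \<times> {..<m}) (V \<times> {..<m}) (twisted_edges I K)"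
    unfolding is_cover_def
  proof (intro conjI)
    show "\<forall>u\<in>V. \<forall>x\<in>{u} \<times> {..<m}. \<forall>y\<in>{u} \<times> {..<m}. x \<noteq> y \<longrightarrow> {x, y} \<in> twisted_edges I K"
      by (auto simp: twisted_edges_iff)
  qed (use simple lifts matching in auto)
  then show ?thesis by (simp add: is_mfold_cover_def card_cartesian_product)
qed

lemma P_DP_twisted:
  assumes "inj_on I {..<m}" "inj_on K {..<m}" "\<And>j. j < m \<Longrightarrow> I j < m" "\<And>j. j < m \<Longrightarrow> K j < m"
    and "\<And>j. j < m \<Longrightarrow> by_eq_type A\<^sub>1 A\<^sub>2 A\<^sub>3 A\<^sub>4 A\<^sub>5 (I j) j (K j) = A"
  shows "real (P_DP V (V \<times> {..<m}) (twisted_edges I K)) = real (chrom_poly V E\<^sub>0 m) - A"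
proof -
  have cover: "is_cover V E (\<lambda>v. {v} \<times> {..<m}) (V \<times> {..<m}) (twisted_edges I K)"
    using twisted_cover[OF assms(1,2)] by (simp add: is_mfold_cover_def)
  have lab: "bij_betw (Pair v) {..<m} ({v} \<times> {..<m})" for v
    by (rule bij_betwI[where g = snd]) auto
  have "{f \<in> C\<^sub>0. {(a\<^sub>1, f a\<^sub>1), (a\<^sub>2, f a\<^sub>2)} \<in> twisted_edges I K \<or> {(a\<^sub>2, f a\<^sub>2), (a\<^sub>3, f a\<^sub>3)} \<in> twisted_edges I K}
      = {f \<in> C\<^sub>0. f a\<^sub>1 = I (f a\<^sub>2) \<or> f a\<^sub>3 = K (f a\<^sub>2)}"
    using C\<^sub>0_less path_vertices assms(3,4) by (auto simp: twisted_edges_crossing)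
  then show ?thesis
    using P_DP_eq_card_C\<^sub>0[OF cover lab twisted_edges_natural] card_C\<^sub>0_crossing_eq[OF assms(3-5)]
    by (simp add: chrom_poly_def C\<^sub>0_def)
qed

definition "rot j = (if Suc j = m then 0 else Suc j)"

lemma rot_less: "j < m \<Longrightarrow> rot j < m"
  using m by (auto simp: rot_def)

lemma inj_on_rot: "inj_on rot {..<m}"
  by (rule inj_onI) (auto simp: rot_def split: if_splits)

lemma rot_ne: "j < m \<Longrightarrow> rot j \<noteq> j" "j < m \<Longrightarrow> rot (rot j) \<noteq> j"
  using m by (auto simp: rot_def split: if_splits)

lemma exists_twist:
  assumes "A \<in> {A\<^sub>1, A\<^sub>2, A\<^sub>3, A\<^sub>4, A\<^sub>5}"
  obtains I K where "I \<in> {id, rot}" "K \<in> {id, rot, rot \<circ> rot}"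
    "\<And>j. j < m \<Longrightarrow> by_eq_type A\<^sub>1 A\<^sub>2 A\<^sub>3 A\<^sub>4 A\<^sub>5 (I j) j (K j) = A"
proof -
  have distinct: "rot j \<noteq> j" "j \<noteq> rot j" "rot (rot j) \<noteq> j" "j \<noteq> rot (rot j)"
      "rot (rot j) \<noteq> rot j" "rot j \<noteq> rot (rot j)" if "j < m" for j
    using rot_ne rot_less that by metis+
  from assms consider "A = A\<^sub>1" | "A = A\<^sub>2" | "A = A\<^sub>3" | "A = A\<^sub>4" | "A = A\<^sub>5" by blast
  then show thesis
  proof cases
    case 1 show thesis by (rule that[of id id]) (simp_all add: 1 by_eq_type_def)
  next
    case 2 show thesis by (rule that[of id rot]) (simp_all add: 2 by_eq_type_def distinct)
  next
    case 3 show thesis by (rule that[of rot id]) (simp_all add: 3 by_eq_type_def distinct)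
  next
    case 4 show thesis by (rule that[of rot rot]) (simp_all add: 4 by_eq_type_def distinct)
  next
    case 5 show thesis by (rule that[of rot "rot \<circ> rot"]) (simp_all add: 5 by_eq_type_def distinct)
  qed
qed

lemma exists_extremal_cover:
  "\<exists>(L' :: 'a \<Rightarrow> ('a \<times> nat) set) VH' EH'.
     is_mfold_cover V E m L' VH' EH' \<and> real (P_DP V VH' EH') = real (chrom_poly V E\<^sub>0 m) - A_max"
proof -
  have "A_max \<in> {A\<^sub>1, A\<^sub>2, A\<^sub>3, A\<^sub>4, A\<^sub>5}" unfolding A_max_def by (rule Max_in) auto
  from exists_twist[OF this] obtain I K where IK: "I \<in> {id, rot}" "K \<in> {id, rot, rot \<circ> rot}"
    and type: "\<And>j. j < m \<Longrightarrow> by_eq_type A\<^sub>1 A\<^sub>2 A\<^sub>3 A\<^sub>4 A\<^sub>5 (I j) j (K j) = A_max"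
    by blast
  have perm: "inj_on g {..<m} \<and> (\<forall>j<m. g j < m)" if "g \<in> {id, rot, rot \<circ> rot}" for g
  proof -
    have "inj_on (rot \<circ> rot) {..<m}"
      by (rule comp_inj_on[OF inj_on_rot inj_on_subset[OF inj_on_rot]]) (auto simp: rot_less)
    then show ?thesis using that inj_on_rot rot_less by auto
  qed
  have "I \<in> {id, rot, rot \<circ> rot}" using IK(1) by blast
  then show ?thesis
    using twisted_cover P_DP_twisted[OF _ _ _ _ type] perm[of I] perm[OF IK(2)] by blast
qed

end

theorem mainTheorem14:
  fixes V :: "'a set" and E :: "'a set set" and m :: nat
    and L :: "'a \<Rightarrow> 'b set" and VH :: "'b set" and EH :: "'b set set"
    and a1 a2 a3 :: 'a
  assumes G: "simple_graph V E"
    and m: "m \<ge> 3"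
    and cov: "is_mfold_cover V E m L VH EH"
    and path: "a1 \<in> V" "a2 \<in> V" "a3 \<in> V" "a1 \<noteq> a2" "a2 \<noteq> a3" "a1 \<noteq> a3"
      "{a1, a2} \<in> E" "{a2, a3} \<in> E"
    and nonadj: "{a1, a3} \<notin> E"
    and nat_bij: "natural_bijection V (E - {{a1, a2}, {a2, a3}}) m L
        (EH - (edges_between EH (L a1) (L a2) \<union> edges_between EH (L a2) (L a3)))"
  shows
    "(let e1 = {a1, a2}; e2 = {a2, a3};
          P0 = real (chrom_poly V (E - {e1, e2}) m);
          P1 = real (chrom_poly V (E - {e1}) m);
          P2 = real (chrom_poly V (E - {e2}) m);
          P = real (chrom_poly V E m);
          Ps = real (chrom_poly V (E \<union> {{a1, a3}}) m);
          A1 = P0 - P;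
          A2 = P0 - P2 + P / (real m - 1);
          A3 = P0 - P1 + P / (real m - 1);
          A4 = (P1 + P2 + Ps - P) / (real m - 1);
          A5 = (P1 + P2 - Ps / (real m - 2)) / (real m - 1);
          B = P0 - Max {A1, A2, A3, A4, A5}
      in real (P_DP V VH EH) \<ge> B \<and>
         (\<exists>(L' :: 'a \<Rightarrow> ('a \<times> nat) set) VH' EH'.
             is_mfold_cover V E m L' VH' EH' \<and> real (P_DP V VH' EH') = B))"

proof -
  interpret two_edge_path V E m a1 a2 a3
    using G m path nonadj by unfold_locales auto
  have E\<^sub>0: "E - {{a1, a2}, {a2, a3}} = E\<^sub>0" by (simp add: E\<^sub>0_def)
  have "real (chrom_poly V E\<^sub>0 m) - A_max \<le> real (P_DP V VH EH)"
    using P_DP_lower_bound[OF cov nat_bij[unfolded E\<^sub>0]] by blast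
  then show ?thesis
    unfolding Let_def E\<^sub>0 A_eq_chrom_poly[symmetric] A_max_def[symmetric]
    using exists_extremal_cover by blast
qed

end
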